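(* Let $0<\epsilon\le\beta<\tfrac12$ and $b>0$. Let $\widehat Q_2$ be the estimator $$\widehat Q_2=\frac1n\sum_{i=1}^n\big[(X_i^2-\sigma^2\tau_n)_+-\mu_0\big]\big[(Y_i^2-\sigma^2\tau_n)_+-\theta_0\big],\qquad \mu_0=\theta_0:=E_0(Y_i^2-\sigma^2\tau_n)_+,$$ with threshold $\tau_n=\log n$, where $E_0$ denotes expectation when $Y_i\sim N(0,\sigma^2)$. Then there is a constant $C>0$ (depending only on $\beta,\epsilon,b,\sigma$) such that for all sufficiently large $n$, $$\sup_{(\mu,\theta)\in\Omega(\beta,\epsilon,b)}E_{(\mu,\theta)}\big(\widehat Q_2-Q(\mu,\theta)\big)^2\le C\Big[n^{2\epsilon+4b-2}(\log n)^2+n^{\epsilon+6b-2}\Big].$$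
   Context: Gaussian two-sequence model: one observes $X_i=\mu_i+\sigma z_i'$, $Y_i=\theta_i+\sigma z_i$, $i=1,\dots,n$, where $z_1',\dots,z_n',z_1,\dots,z_n$ are i.i.d. $N(0,1)$ and the noise level $\sigma>0$ is known. The target functional is $Q(\mu,\theta)=\frac1n\sum_{i=1}^n\mu_i^2\theta_i^2$. For $x\in\mathbb R$, $x_+=\max\{x,0\}$. For vectors, $\|\mu\|_0$ is the number of nonzero entries, $\|\mu\|_\infty=\max_i|\mu_i|$, and $\mu\star\theta=(\mu_1\theta_1,\dots,\mu_n\theta_n)$. With $k_n=n^\beta$, $q_n=n^\epsilon$, $s_n=n^b$ (where $0<\epsilon\le\beta<\tfrac12$, $b\in\mathbb R$), the parameter space is $$\Omega(\beta,\epsilon,b)=\{(\mu,\theta)\in\mathbb R^n\times\mathbb R^n:\|\mu\|_0\le k_n,\|\mu\|_\infty\le s_n,\|\theta\|_0\le k_n,\|\theta\|_\infty\le s_n,\|\mu\star\theta\|_0\le q_n\}.$$ *)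

theory Defs
  imports "HOL-Probability.Probability"
begin

definition std_gauss :: "real measure" where
  "std_gauss = density lborel std_normal_density"

definition noise :: "nat \<Rightarrow> ((nat \<Rightarrow> real) \<times> (nat \<Rightarrow> real)) measure" where
  "noise n = (PiM {..<n} (\<lambda>_. std_gauss)) \<Otimes>\<^sub>M (PiM {..<n} (\<lambda>_. std_gauss))"

definition tau :: "nat \<Rightarrow> real" where
  "tau n = ln (real n)"

definition cent0 :: "real \<Rightarrow> nat \<Rightarrow> real" where
  "cent0 \<sigma> n = (\<integral>z. max ((\<sigma> * z)\<^sup>2 - \<sigma>\<^sup>2 * tau n) 0 \<partial>std_gauss)"

definition Qhat2 :: "real \<Rightarrow> nat \<Rightarrow> (nat \<Rightarrow> real) \<Rightarrow> (nat \<Rightarrow> real) \<Rightarrow> real" where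
  "Qhat2 \<sigma> n X Y = (1 / real n) * (\<Sum>i<n.
      (max ((X i)\<^sup>2 - \<sigma>\<^sup>2 * tau n) 0 - cent0 \<sigma> n) *
      (max ((Y i)\<^sup>2 - \<sigma>\<^sup>2 * tau n) 0 - cent0 \<sigma> n))"

definition Qfun :: "nat \<Rightarrow> (nat \<Rightarrow> real) \<Rightarrow> (nat \<Rightarrow> real) \<Rightarrow> real" where
  "Qfun n \<mu> \<theta> = (1 / real n) * (\<Sum>i<n. (\<mu> i)\<^sup>2 * (\<theta> i)\<^sup>2)"

definition Omega :: "real \<Rightarrow> real \<Rightarrow> real \<Rightarrow> nat \<Rightarrow> ((nat \<Rightarrow> real) \<times> (nat \<Rightarrow> real)) set" where
  "Omega \<beta> \<epsilon> b n = {(\<mu>, \<theta>).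
      real (card {i\<in>{..<n}. \<mu> i \<noteq> 0}) \<le> real n powr \<beta> \<and>
      (\<forall>i<n. \<bar>\<mu> i\<bar> \<le> real n powr b) \<and>
      real (card {i\<in>{..<n}. \<theta> i \<noteq> 0}) \<le> real n powr \<beta> \<and>
      (\<forall>i<n. \<bar>\<theta> i\<bar> \<le> real n powr b) \<and>
      real (card {i\<in>{..<n}. \<mu> i * \<theta> i \<noteq> 0}) \<le> real n powr \<epsilon>}"

definition mse :: "real \<Rightarrow> nat \<Rightarrow> (nat \<Rightarrow> real) \<Rightarrow> (nat \<Rightarrow> real) \<Rightarrow> ennreal" where
  "mse \<sigma> n \<mu> \<theta> = (\<integral>\<^sup>+ w. ennreal ((Qhat2 \<sigma> n (\<lambda>i. \<mu> i + \<sigma> * fst w i) (\<lambda>i. \<theta> i + \<sigma> * snd w i)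
        - Qfun n \<mu> \<theta>)\<^sup>2) \<partial>noise n)"

end

theory Submission
  imports Defs
begin

text \<open>
  Each term of the estimator is a product of two independent centred thresholded squares
  \<open>t(x) = (x\<^sup>2 - \<sigma>\<^sup>2 \<tau>)\<^sub>+ - \<mu>\<^sub>0\<close>.  For an observation with mean \<open>\<rho>\<close>, the mean of \<open>t\<close> is within
  \<open>\<sigma>\<^sup>2 (\<tau> + 1)\<close> of \<open>\<rho>\<^sup>2\<close> and its variance is at most \<open>4 \<rho>\<^sup>2 \<sigma>\<^sup>2 + 2 \<sigma>\<^sup>4\<close>; for \<open>\<rho> = 0\<close> it is
  exactly centred, and because \<open>\<tau> = log n\<close> its second moment is \<open>O(n powr -\<kappa>)\<close> for every
  \<open>\<kappa> < 1/2\<close>, by \<open>E exp (\<kappa> z\<^sup>2) = 1 / sqrt (1 - 2 \<kappa>)\<close>.  Independence splits the mean squared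
  error into the squared bias, to which only the at most \<open>n powr \<epsilon>\<close> coordinates with
  \<open>\<mu>\<^sub>i \<theta>\<^sub>i \<noteq> 0\<close> contribute, and the sum of the variances of the products, in which
  coordinates outside the supports of \<open>\<mu>\<close> and \<open>\<theta>\<close> contribute only the small null terms.
  Taking \<open>\<kappa> = max \<beta> ((1 - \<epsilon>)/2)\<close> makes those null terms of the same order as the sparse ones.
\<close>


section \<open>The standard Gaussian\<close>

lemma prob_space_std_gauss: "prob_space std_gauss"
  unfolding std_gauss_def by (rule prob_space_normal_density[of 1 0, simplified])

interpretation std_gauss: prob_space std_gauss
  by (rule prob_space_std_gauss)

lemma space_std_gauss [simp]: "space std_gauss = UNIV"
  unfolding std_gauss_def by simp

lemma sets_std_gauss [simp]: "sets std_gauss = sets borel"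
  unfolding std_gauss_def by simp

lemma measurable_std_gauss [simp]: "measurable std_gauss N = measurable borel N"
  by (rule measurable_cong_sets) auto

lemma measure_std_gauss_UNIV [simp]: "measure std_gauss UNIV = 1"
  using std_gauss.prob_space by simp

lemma integrable_std_gauss_power: "integrable std_gauss (\<lambda>z. z ^ k)"
  unfolding std_gauss_def by (rule integrable_std_normal_distribution_moment)

lemma integrable_std_gauss_poly4:
  "integrable std_gauss (\<lambda>z. c0 + c1*z + c2*z^2 + c3*z^3 + c4*z^4 :: real)"
  using integrable_std_gauss_power[of 1] by (simp add: integrable_std_gauss_power)

lemma integral_std_gauss_poly4:
  "(\<integral>z. c0 + c1*z + c2*z^2 + c3*z^3 + c4*z^4 \<partial>std_gauss) = (c0 + c2 + 3*c4 :: real)"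
proof -
  have odd: "(\<integral>z. z^k \<partial>std_gauss) = 0" if "odd k" for k
    unfolding std_gauss_def using that by (rule integral_std_normal_distribution_moment_odd)
  have even: "(\<integral>z. z^(2*k) \<partial>std_gauss) = fact (2*k) / (2^k * fact k)" for k
    unfolding std_gauss_def by (rule std_normal_distribution_even_moments)
  have "(\<integral>z. z \<partial>std_gauss) = 0" using odd[of 1] by simp
  moreover have "(\<integral>z. z^2 \<partial>std_gauss) = 1" using even[of 1] by simp
  moreover have "(\<integral>z. z^3 \<partial>std_gauss) = 0" using odd[of 3] by simp
  moreover have "(\<integral>z. z^4 \<partial>std_gauss) = 3" using even[of 2] by (simp add: fact_numeral)
  ultimately show ?thesis
    using integrable_std_gauss_power[of 1]
    by (simp add: integrable_std_gauss_power)
qed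

lemma integrable_std_gauss_bounded:
  fixes f :: "real \<Rightarrow> real"
  assumes [measurable]: "f \<in> borel_measurable borel" and "\<And>z. \<bar>f z\<bar> \<le> A + B * z^k"
  shows "integrable std_gauss f"
proof (rule Bochner_Integration.integrable_bound)
  show "integrable std_gauss (\<lambda>z. A + B * z^k)"
    by (simp add: integrable_std_gauss_power)
  show "AE z in std_gauss. norm (f z) \<le> norm (A + B*z^k)"
    using assms(2) by (auto intro: order.trans[OF _ abs_ge_self])
qed simp

lemma std_gauss_exp_square:
  fixes \<kappa> :: real
  assumes "\<kappa> < 1/2"
  shows "integrable std_gauss (\<lambda>z. exp (\<kappa> * z^2))"
    and "(\<integral>z. exp (\<kappa> * z^2) \<partial>std_gauss) = 1 / sqrt (1 - 2*\<kappa>)"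
proof -
  define s where "s = 1 / sqrt (1 - 2*\<kappa>)"
  have s0: "s > 0" using assms by (simp add: s_def)
  have s2: "s^2 = 1 / (1 - 2*\<kappa>)" using assms by (simp add: s_def power_divide)
  \<comment> \<open>The tilted density is the \<open>N(0, s\<^sup>2)\<close> density up to the factor \<open>s\<close>.\<close>
  have tilt: "std_normal_density z * exp (\<kappa> * z^2) = s * normal_density 0 s z" for z
  proof -
    have "sqrt (2 * pi * s\<^sup>2) = sqrt (2*pi) * s" using s0 by (simp add: real_sqrt_mult)
    moreover have "- z\<^sup>2 / 2 + \<kappa> * z^2 = -(z - 0)\<^sup>2 / (2 * s\<^sup>2)"
      using assms by (simp add: s2 field_simps)
    ultimately show ?thesis using s0
      by (simp add: normal_density_def std_normal_density_def exp_add[symmetric] field_simps)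
  qed
  show "integrable std_gauss (\<lambda>z. exp (\<kappa> * z^2))"
    using integrable_normal_density[of s 0] s0 unfolding std_gauss_def
    by (subst integrable_real_density) (auto simp: tilt)
  have "(\<integral>z. exp (\<kappa> * z^2) \<partial>std_gauss) = (\<integral>z. s * normal_density 0 s z \<partial>lborel)"
    unfolding std_gauss_def by (subst integral_real_density) (auto simp: tilt)
  also have "\<dots> = s" using integral_normal_density[of s 0] s0 by simp
  finally show "(\<integral>z. exp (\<kappa> * z^2) \<partial>std_gauss) = 1 / sqrt (1 - 2*\<kappa>)"
    by (simp add: s_def)
qed

lemma (in prob_space) variance_le_expectation_power2_diff:
  fixes f :: "'a \<Rightarrow> real"
  assumes f: "integrable M f" and f2: "integrable M (\<lambda>x. (f x)\<^sup>2)"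
  shows "integrable M (\<lambda>x. (f x - d)\<^sup>2)"
    and "variance f \<le> expectation (\<lambda>x. (f x - d)\<^sup>2)"
proof -
  have eq: "(\<lambda>x. (f x - d)\<^sup>2) = (\<lambda>x. (f x)\<^sup>2 + ((-2*d) * f x + d\<^sup>2))"
    by (auto simp: power2_eq_square algebra_simps)
  show "integrable M (\<lambda>x. (f x - d)\<^sup>2)"
    unfolding eq using f f2 by auto
  have "expectation (\<lambda>x. (f x - d)\<^sup>2) = expectation (\<lambda>x. (f x)\<^sup>2) - 2*d*expectation f + d\<^sup>2"
    unfolding eq using f f2 by (simp add: prob_space)
  also have "\<dots> = variance f + (expectation f - d)\<^sup>2"
    using f f2 by (simp add: variance_eq prob_space power2_eq_square algebra_simps)
  finally show "variance f \<le> expectation (\<lambda>x. (f x - d)\<^sup>2)" by simp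
qed

section \<open>Thresholded squares of a Gaussian observation\<close>

definition thresh_sq :: "real \<Rightarrow> real \<Rightarrow> real \<Rightarrow> real" where
  "thresh_sq c m x = max (x\<^sup>2 - c) 0 - m"

definition null_mean :: "real \<Rightarrow> real \<Rightarrow> real" where
  "null_mean c \<sigma> = (\<integral>z. max ((\<sigma>*z)\<^sup>2 - c) 0 \<partial>std_gauss)"

lemma measurable_thresh_sq [measurable]: "(\<lambda>z. thresh_sq c m (\<rho> + \<sigma>*z)) \<in> borel_measurable borel"
  unfolding thresh_sq_def by measurable

lemma power2_add_le: "(x + y)\<^sup>2 \<le> 2*x\<^sup>2 + 2*y\<^sup>2" for x y :: real
  using zero_le_power2[of "x - y"] by (simp add: power2_eq_square algebra_simps)

lemma abs_thresh_sq_le: "\<bar>thresh_sq c m (\<rho> + \<sigma>*z)\<bar> \<le> (2*\<rho>\<^sup>2 + \<bar>c\<bar> + \<bar>m\<bar>) + 2*\<sigma>\<^sup>2 * z^2"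
proof -
  have "\<bar>thresh_sq c m (\<rho> + \<sigma>*z)\<bar> \<le> (\<rho> + \<sigma>*z)\<^sup>2 + \<bar>c\<bar> + \<bar>m\<bar>"
    using zero_le_power2[of "\<rho> + \<sigma>*z"] unfolding thresh_sq_def by linarith
  then show ?thesis
    using power2_add_le[of \<rho> "\<sigma>*z"] by (simp add: power_mult_distrib)
qed

lemma integrable_thresh_sq: "integrable std_gauss (\<lambda>z. thresh_sq c m (\<rho> + \<sigma>*z))"
  by (rule integrable_std_gauss_bounded[OF measurable_thresh_sq abs_thresh_sq_le])

lemma integrable_thresh_sq_power2: "integrable std_gauss (\<lambda>z. (thresh_sq c m (\<rho> + \<sigma>*z))\<^sup>2)"
proof (rule integrable_std_gauss_bounded)
  fix z
  define A where "A = 2*\<rho>\<^sup>2 + \<bar>c\<bar> + \<bar>m\<bar>"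
  have "\<bar>thresh_sq c m (\<rho> + \<sigma>*z)\<bar>\<^sup>2 \<le> (A + 2*\<sigma>\<^sup>2 * z^2)\<^sup>2"
    using abs_thresh_sq_le[of c m \<rho> \<sigma> z] unfolding A_def by (rule power_mono) simp
  also have "\<dots> \<le> 2*A\<^sup>2 + 8*\<sigma>^4 * z^4"
    using power2_add_le[of A "2*\<sigma>\<^sup>2 * z^2"] by (simp add: power_mult_distrib flip: power_mult)
  finally show "\<bar>(thresh_sq c m (\<rho> + \<sigma>*z))\<^sup>2\<bar> \<le> 2*A\<^sup>2 + 8*\<sigma>^4 * z^4" by simp
qed measurable

lemma integral_shifted_power2: "(\<integral>z. (\<rho> + \<sigma>*z)\<^sup>2 \<partial>std_gauss) = \<rho>\<^sup>2 + \<sigma>\<^sup>2"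
  and integrable_shifted_power2: "integrable std_gauss (\<lambda>z. (\<rho> + \<sigma>*z)\<^sup>2)"
proof -
  have poly: "(\<lambda>z. (\<rho> + \<sigma>*z)\<^sup>2) = (\<lambda>z. \<rho>\<^sup>2 + (2*\<rho>*\<sigma>)*z + \<sigma>\<^sup>2*z^2 + 0*z^3 + 0*z^4)"
    by (auto simp: power2_eq_square algebra_simps)
  show "(\<integral>z. (\<rho> + \<sigma>*z)\<^sup>2 \<partial>std_gauss) = \<rho>\<^sup>2 + \<sigma>\<^sup>2"
    unfolding poly integral_std_gauss_poly4 by simp
  show "integrable std_gauss (\<lambda>z. (\<rho> + \<sigma>*z)\<^sup>2)"
    unfolding poly by (rule integrable_std_gauss_poly4)
qed

lemma integral_positive_part_bounds:
  assumes "0 \<le> c"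
  shows "\<rho>\<^sup>2 + \<sigma>\<^sup>2 - c \<le> (\<integral>z. max ((\<rho> + \<sigma>*z)\<^sup>2 - c) 0 \<partial>std_gauss)"
    and "(\<integral>z. max ((\<rho> + \<sigma>*z)\<^sup>2 - c) 0 \<partial>std_gauss) \<le> \<rho>\<^sup>2 + \<sigma>\<^sup>2"
proof -
  have int: "integrable std_gauss (\<lambda>z. max ((\<rho> + \<sigma>*z)\<^sup>2 - c) 0)"
    using integrable_thresh_sq[of c 0 \<rho> \<sigma>] by (simp add: thresh_sq_def)
  have "(\<integral>z. (\<rho> + \<sigma>*z)\<^sup>2 - c \<partial>std_gauss) \<le> (\<integral>z. max ((\<rho> + \<sigma>*z)\<^sup>2 - c) 0 \<partial>std_gauss)"
    using int integrable_shifted_power2 by (intro integral_mono) auto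
  then show "\<rho>\<^sup>2 + \<sigma>\<^sup>2 - c \<le> (\<integral>z. max ((\<rho> + \<sigma>*z)\<^sup>2 - c) 0 \<partial>std_gauss)"
    using integrable_shifted_power2 by (simp add: integral_shifted_power2)
  have "(\<integral>z. max ((\<rho> + \<sigma>*z)\<^sup>2 - c) 0 \<partial>std_gauss) \<le> (\<integral>z. (\<rho> + \<sigma>*z)\<^sup>2 \<partial>std_gauss)"
    using int integrable_shifted_power2 assms by (intro integral_mono) auto
  then show "(\<integral>z. max ((\<rho> + \<sigma>*z)\<^sup>2 - c) 0 \<partial>std_gauss) \<le> \<rho>\<^sup>2 + \<sigma>\<^sup>2"
    by (simp add: integral_shifted_power2)
qed

lemma integral_thresh_sq:
  "(\<integral>z. thresh_sq c m (\<rho> + \<sigma>*z) \<partial>std_gauss) = (\<integral>z. max ((\<rho> + \<sigma>*z)\<^sup>2 - c) 0 \<partial>std_gauss) - m"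
  using integrable_thresh_sq[of c 0 \<rho> \<sigma>] unfolding thresh_sq_def by simp

lemma null_mean_bounds: "0 \<le> c \<Longrightarrow> 0 \<le> null_mean c \<sigma> \<and> null_mean c \<sigma> \<le> \<sigma>\<^sup>2"
  using integral_positive_part_bounds(2)[of c 0 \<sigma>] unfolding null_mean_def by auto

lemma integral_thresh_sq_null: "(\<integral>z. thresh_sq c (null_mean c \<sigma>) (\<sigma>*z) \<partial>std_gauss) = 0"
  using integral_thresh_sq[of c "null_mean c \<sigma>" 0 \<sigma>] by (simp add: null_mean_def)

lemma integral_thresh_sq_bias:
  assumes "0 \<le> c"
  shows "\<bar>(\<integral>z. thresh_sq c (null_mean c \<sigma>) (\<rho> + \<sigma>*z) \<partial>std_gauss) - \<rho>\<^sup>2\<bar> \<le> c + \<sigma>\<^sup>2"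
  using integral_positive_part_bounds[OF assms, of \<rho> \<sigma>] null_mean_bounds[OF assms, of \<sigma>]
  by (simp add: integral_thresh_sq abs_le_iff)

lemma variance_thresh_sq_le:
  "std_gauss.variance (\<lambda>z. thresh_sq c m (\<rho> + \<sigma>*z)) \<le> 4*\<rho>\<^sup>2*\<sigma>\<^sup>2 + 2*\<sigma>^4"
proof -
  let ?f = "\<lambda>z. thresh_sq c m (\<rho> + \<sigma>*z)"
  let ?p = "\<lambda>z. \<sigma>^4 + (-4*\<rho>*\<sigma>^3)*z + (4*\<rho>\<^sup>2*\<sigma>\<^sup>2 - 2*\<sigma>^4)*z^2 + (4*\<rho>*\<sigma>^3)*z^3 + \<sigma>^4*z^4"
  \<comment> \<open>Compare with the value at the mean of \<open>(\<rho> + \<sigma> z)\<^sup>2\<close>; positive parts are 1-Lipschitz.\<close>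
  define d where "d = max (\<rho>\<^sup>2 + \<sigma>\<^sup>2 - c) 0 - m"
  note dev = std_gauss.variance_le_expectation_power2_diff
    [OF integrable_thresh_sq integrable_thresh_sq_power2, of c m \<rho> \<sigma> d]
  have "std_gauss.variance ?f \<le> (\<integral>z. (?f z - d)\<^sup>2 \<partial>std_gauss)" by (rule dev(2))
  also have "\<dots> \<le> (\<integral>z. ?p z \<partial>std_gauss)"
  proof (intro integral_mono dev(1) integrable_std_gauss_poly4)
    fix z
    have "\<bar>?f z - d\<bar> \<le> \<bar>(\<rho> + \<sigma>*z)\<^sup>2 - (\<rho>\<^sup>2 + \<sigma>\<^sup>2)\<bar>"
      unfolding thresh_sq_def d_def by linarith
    then have "(?f z - d)\<^sup>2 \<le> ((\<rho> + \<sigma>*z)\<^sup>2 - (\<rho>\<^sup>2 + \<sigma>\<^sup>2))\<^sup>2"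
      by (metis abs_le_square_iff)
    also have "\<dots> = ?p z"
      by (simp add: power2_eq_square power3_eq_cube power4_eq_xxxx algebra_simps)
    finally show "(?f z - d)\<^sup>2 \<le> ?p z" .
  qed
  also have "\<dots> = 4*\<rho>\<^sup>2*\<sigma>\<^sup>2 + 2*\<sigma>^4" unfolding integral_std_gauss_poly4 by simp
  finally show ?thesis .
qed

lemma power2_le_exp_scaled:
  fixes y \<kappa> :: real
  assumes "0 \<le> y" "0 < \<kappa>"
  shows "y\<^sup>2 \<le> (4/\<kappa>\<^sup>2) * exp (\<kappa> * y)"
proof -
  have "\<kappa>*y/2 \<le> exp (\<kappa>*y/2)"
    using exp_ge_add_one_self[of "\<kappa>*y/2"] by linarith
  then have "(\<kappa>*y/2)\<^sup>2 \<le> (exp (\<kappa>*y/2))\<^sup>2"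
    using assms by (intro power_mono) auto
  also have "(exp (\<kappa>*y/2))\<^sup>2 = exp (\<kappa>*y)" by (simp add: power2_eq_square flip: exp_add)
  finally show ?thesis using assms by (simp add: power_mult_distrib power_divide field_simps)
qed

lemma null_thresh_sq_second_moment_le:
  fixes \<sigma> \<tau> \<kappa> :: real
  assumes "0 < \<kappa>" "\<kappa> < 1/2"
  defines "c \<equiv> \<sigma>\<^sup>2 * \<tau>"
  shows "(\<integral>z. (thresh_sq c (null_mean c \<sigma>) (\<sigma>*z))\<^sup>2 \<partial>std_gauss)
     \<le> \<sigma>^4 * (4/\<kappa>\<^sup>2) * exp (-\<kappa>*\<tau>) / sqrt (1 - 2*\<kappa>)"
proof -
  define \<psi> where "\<psi> = (\<lambda>z. max ((\<sigma>*z)\<^sup>2 - c) 0)"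
  define K where "K = \<sigma>^4 * (4/\<kappa>\<^sup>2) * exp (-\<kappa>*\<tau>)"
  have \<psi>: "integrable std_gauss \<psi>" "integrable std_gauss (\<lambda>z. (\<psi> z)\<^sup>2)"
    using integrable_thresh_sq[of c 0 0 \<sigma>] integrable_thresh_sq_power2[of c 0 0 \<sigma>]
    by (simp_all add: \<psi>_def thresh_sq_def)
  have "(\<integral>z. (thresh_sq c (null_mean c \<sigma>) (\<sigma>*z))\<^sup>2 \<partial>std_gauss) = std_gauss.variance \<psi>"
    by (simp add: thresh_sq_def null_mean_def \<psi>_def)
  also have "\<dots> \<le> (\<integral>z. (\<psi> z)\<^sup>2 \<partial>std_gauss)"
    using \<psi> by (simp add: std_gauss.variance_eq)
  also have "\<dots> \<le> (\<integral>z. K * exp (\<kappa> * z\<^sup>2) \<partial>std_gauss)"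
  proof (intro integral_mono \<psi>(2))
    show "integrable std_gauss (\<lambda>z. K * exp (\<kappa> * z\<^sup>2))"
      using std_gauss_exp_square(1)[of \<kappa>] assms by simp
    fix z
    have "(max (z\<^sup>2 - \<tau>) 0)\<^sup>2 \<le> (4/\<kappa>\<^sup>2) * exp (\<kappa> * (z\<^sup>2 - \<tau>))"
      using power2_le_exp_scaled[of "z\<^sup>2 - \<tau>" \<kappa>] assms by (cases "0 \<le> z\<^sup>2 - \<tau>") auto
    then have "\<sigma>^4 * (max (z\<^sup>2 - \<tau>) 0)\<^sup>2 \<le> \<sigma>^4 * ((4/\<kappa>\<^sup>2) * exp (\<kappa> * (z\<^sup>2 - \<tau>)))"
      by (intro mult_left_mono) auto
    moreover have "\<psi> z = \<sigma>\<^sup>2 * max (z\<^sup>2 - \<tau>) 0"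
      by (simp add: \<psi>_def c_def power_mult_distrib max_mult_distrib_left algebra_simps)
    moreover have "exp (\<kappa> * (z\<^sup>2 - \<tau>)) = exp (-\<kappa>*\<tau>) * exp (\<kappa> * z\<^sup>2)"
      by (simp add: algebra_simps flip: exp_add)
    ultimately show "(\<psi> z)\<^sup>2 \<le> K * exp (\<kappa> * z\<^sup>2)"
      by (simp add: K_def power_mult_distrib algebra_simps flip: power_mult)
  qed
  also have "\<dots> = K / sqrt (1 - 2*\<kappa>)"
    using std_gauss_exp_square(2)[of \<kappa>] assms by simp
  finally show ?thesis by (simp add: K_def)
qed

lemma thresh_sq_moments:
  fixes c \<sigma> \<rho> B :: real
  assumes c: "0 \<le> c" and \<rho>: "\<rho>\<^sup>2 \<le> B"
  defines "F \<equiv> (\<integral>z. thresh_sq c (null_mean c \<sigma>) (\<rho> + \<sigma>*z) \<partial>std_gauss)"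
    and "F2 \<equiv> (\<integral>z. (thresh_sq c (null_mean c \<sigma>) (\<rho> + \<sigma>*z))\<^sup>2 \<partial>std_gauss)"
  shows "\<bar>F - \<rho>\<^sup>2\<bar> \<le> c + \<sigma>\<^sup>2" and "0 \<le> F2 - F\<^sup>2" and "F2 - F\<^sup>2 \<le> 4*B*\<sigma>\<^sup>2 + 2*\<sigma>^4"
    and "F\<^sup>2 \<le> (B + c + \<sigma>\<^sup>2)\<^sup>2"
proof -
  have var: "std_gauss.variance (\<lambda>z. thresh_sq c (null_mean c \<sigma>) (\<rho> + \<sigma>*z)) = F2 - F\<^sup>2"
    unfolding F_def F2_def
    by (rule std_gauss.variance_eq[OF integrable_thresh_sq integrable_thresh_sq_power2])
  show bias: "\<bar>F - \<rho>\<^sup>2\<bar> \<le> c + \<sigma>\<^sup>2"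
    unfolding F_def by (rule integral_thresh_sq_bias[OF c])
  show "0 \<le> F2 - F\<^sup>2"
    using std_gauss.variance_positive[of "\<lambda>z. thresh_sq c (null_mean c \<sigma>) (\<rho> + \<sigma>*z)"]
    unfolding var .
  have "F2 - F\<^sup>2 \<le> 4*\<rho>\<^sup>2*\<sigma>\<^sup>2 + 2*\<sigma>^4"
    using variance_thresh_sq_le[of c "null_mean c \<sigma>" \<rho> \<sigma>] unfolding var .
  also have "\<dots> \<le> 4*B*\<sigma>\<^sup>2 + 2*\<sigma>^4"
    using \<rho> by (intro add_mono mult_right_mono) auto
  finally show "F2 - F\<^sup>2 \<le> 4*B*\<sigma>\<^sup>2 + 2*\<sigma>^4" .
  have "\<bar>F\<bar> \<le> B + c + \<sigma>\<^sup>2"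
    using bias \<rho> zero_le_power2[of \<rho>] unfolding abs_le_iff by linarith
  then show "F\<^sup>2 \<le> (B + c + \<sigma>\<^sup>2)\<^sup>2"
    by (metis abs_le_square_iff abs_of_nonneg abs_ge_zero order.trans)
qed

section \<open>Independent coordinates\<close>

lemma integral_pair_measure_mult:
  fixes F :: "'a \<Rightarrow> real" and G :: "'b \<Rightarrow> real"
  assumes "sigma_finite_measure M1" "sigma_finite_measure M2"
    and F: "integrable M1 F" and G: "integrable M2 G"
  shows "integrable (M1 \<Otimes>\<^sub>M M2) (\<lambda>w. F (fst w) * G (snd w))"
    and "(\<integral>w. F (fst w) * G (snd w) \<partial>(M1 \<Otimes>\<^sub>M M2)) = integral\<^sup>L M1 F * integral\<^sup>L M2 G"
proof -
  interpret pair_sigma_finite M1 M2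
    using assms(1,2) by (rule pair_sigma_finite.intro)
  have [measurable]: "F \<in> borel_measurable M1" "G \<in> borel_measurable M2" using F G by auto
  show int: "integrable (M1 \<Otimes>\<^sub>M M2) (\<lambda>w. F (fst w) * G (snd w))"
  proof (unfold integrable_iff_bounded, intro conjI)
    show "(\<lambda>w. F (fst w) * G (snd w)) \<in> borel_measurable (M1 \<Otimes>\<^sub>M M2)" by measurable
    have "(\<integral>\<^sup>+ w. ennreal (norm (F (fst w) * G (snd w))) \<partial>(M1 \<Otimes>\<^sub>M M2))
        = (\<integral>\<^sup>+ x. \<integral>\<^sup>+ y. ennreal (norm (F x)) * ennreal (norm (G y)) \<partial>M2 \<partial>M1)"
      by (subst M2.nn_integral_fst[symmetric]) (auto simp: abs_mult ennreal_mult)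
    also have "\<dots> = (\<integral>\<^sup>+ x. ennreal (norm (F x)) \<partial>M1) * (\<integral>\<^sup>+ y. ennreal (norm (G y)) \<partial>M2)"
      by (simp add: nn_integral_cmult nn_integral_multc)
    also have "\<dots> < \<infinity>" using F G
      by (simp add: integrable_iff_bounded ennreal_mult_less_top)
    finally show "(\<integral>\<^sup>+ w. ennreal (norm (F (fst w) * G (snd w))) \<partial>(M1 \<Otimes>\<^sub>M M2)) < \<infinity>" .
  qed
  show "(\<integral>w. F (fst w) * G (snd w) \<partial>(M1 \<Otimes>\<^sub>M M2)) = integral\<^sup>L M1 F * integral\<^sup>L M2 G"
    using integral_fst'[OF int] by simp
qed

lemma integral_PiM_component:
  fixes f :: "real \<Rightarrow> real" and I :: "'i set"
  assumes M: "prob_space M" and I: "finite I" "i \<in> I" and f: "integrable M f"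
  shows "integrable (PiM I (\<lambda>_. M)) (\<lambda>x. f (x i))"
    and "(\<integral>x. f (x i) \<partial>PiM I (\<lambda>_. M)) = integral\<^sup>L M f"
proof -
  interpret prob_space M by fact
  interpret product_prob_space "\<lambda>_. M" I by standard
  define F where "F = (\<lambda>k. if k = i then f else (\<lambda>_. 1::real))"
  have intF: "\<And>k. k \<in> I \<Longrightarrow> integrable M (F k)"
    using f by (simp add: F_def)
  have "(\<Prod>k\<in>I. F k (x k)) = f (x i)" for x
    using I by (simp add: F_def if_distribR prod.delta)
  moreover have "(\<Prod>k\<in>I. integral\<^sup>L M (F k)) = integral\<^sup>L M f"
    using I by (simp add: F_def if_distrib prod.delta prob_space.prob_space[OF M] cong: if_cong)
  ultimately show "integrable (PiM I (\<lambda>_. M)) (\<lambda>x. f (x i))"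
    and "(\<integral>x. f (x i) \<partial>PiM I (\<lambda>_. M)) = integral\<^sup>L M f"
    using product_integrable_prod[where f=F, OF I(1) intF]
      product_integral_prod[where f=F, OF I(1) intF] by simp_all
qed

lemma integral_PiM_two_components:
  fixes f g :: "real \<Rightarrow> real" and I :: "'i set"
  assumes M: "prob_space M" and I: "finite I" "i \<in> I" "j \<in> I" "i \<noteq> j"
    and f: "integrable M f" and g: "integrable M g"
  shows "integrable (PiM I (\<lambda>_. M)) (\<lambda>x. f (x i) * g (x j))"
    and "(\<integral>x. f (x i) * g (x j) \<partial>PiM I (\<lambda>_. M)) = integral\<^sup>L M f * integral\<^sup>L M g"
proof -
  interpret prob_space M by fact
  interpret product_prob_space "\<lambda>_. M" I by standard
  define F where "F = (\<lambda>k. if k = i then f else if k = j then g else (\<lambda>_. 1::real))"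
  have intF: "\<And>k. k \<in> I \<Longrightarrow> integrable M (F k)"
    using f g by (simp add: F_def)
  have split: "(\<Prod>k\<in>I. h k) = h i * h j" if "\<And>k. k \<in> I - {i, j} \<Longrightarrow> h k = 1" for h :: "'i \<Rightarrow> real"
  proof -
    have "(\<Prod>k\<in>I. h k) = h i * (\<Prod>k\<in>I-{i}. h k)" using I by (simp add: prod.remove)
    also have "(\<Prod>k\<in>I-{i}. h k) = h j * (\<Prod>k\<in>I-{i}-{j}. h k)"
      using I by (subst prod.remove[of _ j]) auto
    also have "(\<Prod>k\<in>I-{i}-{j}. h k) = 1" using that by (intro prod.neutral) auto
    finally show ?thesis by simp
  qed
  have "(\<Prod>k\<in>I. F k (x k)) = f (x i) * g (x j)" for x
    using I by (subst split) (auto simp: F_def if_distribR)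
  moreover have "(\<Prod>k\<in>I. integral\<^sup>L M (F k)) = integral\<^sup>L M f * integral\<^sup>L M g"
    using I by (subst split) (auto simp: F_def prob_space.prob_space[OF M])
  ultimately show "integrable (PiM I (\<lambda>_. M)) (\<lambda>x. f (x i) * g (x j))"
    and "(\<integral>x. f (x i) * g (x j) \<partial>PiM I (\<lambda>_. M)) = integral\<^sup>L M f * integral\<^sup>L M g"
    using product_integrable_prod[where f=F, OF I(1) intF]
      product_integral_prod[where f=F, OF I(1) intF] by simp_all
qed

lemma integral_PiM_component_pair:
  fixes f :: "'i \<Rightarrow> real \<Rightarrow> real" and I :: "'i set"
  assumes M: "prob_space M" and I: "finite I" "i \<in> I" "j \<in> I"
    and f: "\<And>i. i \<in> I \<Longrightarrow> integrable M (f i)" and f2: "\<And>i. i \<in> I \<Longrightarrow> integrable M (\<lambda>z. (f i z)\<^sup>2)"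
  shows "integrable (PiM I (\<lambda>_. M)) (\<lambda>x. f i (x i) * f j (x j))"
    and "(\<integral>x. f i (x i) * f j (x j) \<partial>PiM I (\<lambda>_. M)) =
          (if i = j then (\<integral>z. (f i z)\<^sup>2 \<partial>M) else integral\<^sup>L M (f i) * integral\<^sup>L M (f j))"
  using integral_PiM_component[OF M I(1,2) f2[OF I(2)]]
    integral_PiM_two_components[OF M I(1,2,3) _ f[OF I(2)] f[OF I(3)]]
  by (cases "i = j"; simp add: power2_eq_square)+

lemma sum_sum_diagonal:
  fixes e A :: "'i \<Rightarrow> real"
  assumes "finite I"
  shows "(\<Sum>i\<in>I. \<Sum>j\<in>I. if i = j then A i else e i * e j) = (\<Sum>i\<in>I. e i)\<^sup>2 + (\<Sum>i\<in>I. A i - (e i)\<^sup>2)"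
proof -
  have "(\<Sum>i\<in>I. \<Sum>j\<in>I. if i = j then A i else e i * e j) =
        (\<Sum>i\<in>I. \<Sum>j\<in>I. e i * e j + (if i = j then A i - (e i)\<^sup>2 else 0))"
    by (intro sum.cong refl) (auto simp: power2_eq_square)
  also have "\<dots> = (\<Sum>i\<in>I. e i)\<^sup>2 + (\<Sum>i\<in>I. A i - (e i)\<^sup>2)"
    using assms by (simp add: sum.distrib power2_eq_square sum_product)
  finally show ?thesis .
qed

lemma integral_pair_PiM_products:
  fixes f h :: "'i \<Rightarrow> real \<Rightarrow> real" and I :: "'i set"
  assumes M: "prob_space M" and I: "finite I" "i \<in> I" "j \<in> I"
    and f: "\<And>i. i \<in> I \<Longrightarrow> integrable M (f i)" and f2: "\<And>i. i \<in> I \<Longrightarrow> integrable M (\<lambda>z. (f i z)\<^sup>2)"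
    and h: "\<And>i. i \<in> I \<Longrightarrow> integrable M (h i)" and h2: "\<And>i. i \<in> I \<Longrightarrow> integrable M (\<lambda>z. (h i z)\<^sup>2)"
  defines "P \<equiv> PiM I (\<lambda>_. M) \<Otimes>\<^sub>M PiM I (\<lambda>_. M)"
    and "Z \<equiv> \<lambda>w i. f i (fst w i) * h i (snd w i)"
  shows "integrable P (\<lambda>w. Z w i * Z w j)"
    and "(\<integral>w. Z w i * Z w j \<partial>P) = (if i = j then (\<integral>z. (f i z)\<^sup>2 \<partial>M) * (\<integral>z. (h i z)\<^sup>2 \<partial>M)
           else (integral\<^sup>L M (f i) * integral\<^sup>L M (h i)) * (integral\<^sup>L M (f j) * integral\<^sup>L M (h j)))"
proof -
  have "sigma_finite_measure (PiM I (\<lambda>_. M))"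
    using M by (intro prob_space_imp_sigma_finite prob_space_PiM) auto
  note pair = integral_pair_measure_mult[OF this this, folded P_def]
  note F = integral_PiM_component_pair[where f=f, OF M I f f2]
  note H = integral_PiM_component_pair[where f=h, OF M I h h2]
  have "Z w i * Z w j = (f i (fst w i) * f j (fst w j)) * (h i (snd w i) * h j (snd w j))" for w
    by (simp add: Z_def algebra_simps)
  then show "integrable P (\<lambda>w. Z w i * Z w j)"
    and "(\<integral>w. Z w i * Z w j \<partial>P) = (if i = j then (\<integral>z. (f i z)\<^sup>2 \<partial>M) * (\<integral>z. (h i z)\<^sup>2 \<partial>M)
           else (integral\<^sup>L M (f i) * integral\<^sup>L M (h i)) * (integral\<^sup>L M (f j) * integral\<^sup>L M (h j)))"
    using pair[OF F(1) H(1)] F(2) H(2) by (auto simp: power2_eq_square)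
qed

lemma integral_power2_sum_products_diff:
  fixes f h :: "'i \<Rightarrow> real \<Rightarrow> real" and I :: "'i set" and c :: real
  assumes M: "prob_space M" and I: "finite I"
    and f: "\<And>i. i \<in> I \<Longrightarrow> integrable M (f i)" and f2: "\<And>i. i \<in> I \<Longrightarrow> integrable M (\<lambda>z. (f i z)\<^sup>2)"
    and h: "\<And>i. i \<in> I \<Longrightarrow> integrable M (h i)" and h2: "\<And>i. i \<in> I \<Longrightarrow> integrable M (\<lambda>z. (h i z)\<^sup>2)"
  defines "P \<equiv> PiM I (\<lambda>_. M) \<Otimes>\<^sub>M PiM I (\<lambda>_. M)"
  shows "integrable P (\<lambda>w. ((\<Sum>i\<in>I. f i (fst w i) * h i (snd w i)) - c)\<^sup>2)"
    and "(\<integral>w. ((\<Sum>i\<in>I. f i (fst w i) * h i (snd w i)) - c)\<^sup>2 \<partial>P)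
         = ((\<Sum>i\<in>I. integral\<^sup>L M (f i) * integral\<^sup>L M (h i)) - c)\<^sup>2
           + (\<Sum>i\<in>I. (\<integral>z. (f i z)\<^sup>2 \<partial>M) * (\<integral>z. (h i z)\<^sup>2 \<partial>M)
                       - (integral\<^sup>L M (f i))\<^sup>2 * (integral\<^sup>L M (h i))\<^sup>2)"
proof -
  have PiM: "prob_space (PiM I (\<lambda>_. M))" using M by (intro prob_space_PiM) auto
  then interpret P: prob_space P unfolding P_def by (intro prob_space_pair)
  define e where "e i = integral\<^sup>L M (f i) * integral\<^sup>L M (h i)" for i
  define A where "A i = (\<integral>z. (f i z)\<^sup>2 \<partial>M) * (\<integral>z. (h i z)\<^sup>2 \<partial>M)" for i
  define Z where "Z w i = f i (fst w i) * h i (snd w i)" for w i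
  have ZZ: "integrable P (\<lambda>w. Z w i * Z w j)
      \<and> (\<integral>w. Z w i * Z w j \<partial>P) = (if i = j then A i else e i * e j)" if "i \<in> I" "j \<in> I" for i j
    using integral_pair_PiM_products[where f=f and h=h, OF M I that f f2 h h2]
    by (simp add: P_def Z_def e_def A_def)
  have Z: "integrable P (\<lambda>w. Z w i) \<and> (\<integral>w. Z w i \<partial>P) = e i" if "i \<in> I" for i
    using integral_pair_measure_mult[OF _ _ integral_PiM_component(1)[OF M I that f[OF that]]
        integral_PiM_component(1)[OF M I that h[OF that]], folded P_def]
      integral_PiM_component(2)[OF M I that f[OF that]] integral_PiM_component(2)[OF M I that h[OF that]]
      prob_space_imp_sigma_finite[OF PiM]
    by (simp add: Z_def e_def)
  have expand: "(\<lambda>w. ((\<Sum>i\<in>I. Z w i) - c)\<^sup>2) =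
     (\<lambda>w. (\<Sum>i\<in>I. \<Sum>j\<in>I. Z w i * Z w j) + ((-2*c) * (\<Sum>i\<in>I. Z w i) + c\<^sup>2))"
    by (simp add: power2_eq_square sum_product algebra_simps)
  have iZ: "integrable P (\<lambda>w. \<Sum>i\<in>I. Z w i)" "integrable P (\<lambda>w. \<Sum>i\<in>I. \<Sum>j\<in>I. Z w i * Z w j)"
    using Z ZZ by auto
  show "integrable P (\<lambda>w. ((\<Sum>i\<in>I. f i (fst w i) * h i (snd w i)) - c)\<^sup>2)"
    using iZ unfolding Z_def[symmetric] expand by auto
  have "(\<integral>w. ((\<Sum>i\<in>I. Z w i) - c)\<^sup>2 \<partial>P)
      = (\<Sum>i\<in>I. \<Sum>j\<in>I. if i = j then A i else e i * e j) + ((-2*c) * (\<Sum>i\<in>I. e i) + c\<^sup>2)"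
    unfolding expand using iZ Z ZZ by (simp add: P.prob_space)
  also have "\<dots> = ((\<Sum>i\<in>I. e i) - c)\<^sup>2 + (\<Sum>i\<in>I. A i - (e i)\<^sup>2)"
    by (simp add: sum_sum_diagonal[OF I] power2_eq_square algebra_simps)
  finally show "(\<integral>w. ((\<Sum>i\<in>I. f i (fst w i) * h i (snd w i)) - c)\<^sup>2 \<partial>P)
         = ((\<Sum>i\<in>I. integral\<^sup>L M (f i) * integral\<^sup>L M (h i)) - c)\<^sup>2
           + (\<Sum>i\<in>I. (\<integral>z. (f i z)\<^sup>2 \<partial>M) * (\<integral>z. (h i z)\<^sup>2 \<partial>M)
                       - (integral\<^sup>L M (f i))\<^sup>2 * (integral\<^sup>L M (h i))\<^sup>2)"
    by (simp add: Z_def e_def A_def power_mult_distrib)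
qed

section \<open>Bias and variance of the estimator\<close>

lemma mse_eq_bias_variance:
  fixes \<sigma> :: real and n :: nat
  defines "c \<equiv> \<sigma>\<^sup>2 * tau n"
  defines "F \<equiv> \<lambda>\<rho>. (\<integral>z. thresh_sq c (null_mean c \<sigma>) (\<rho> + \<sigma>*z) \<partial>std_gauss)"
    and "F2 \<equiv> \<lambda>\<rho>. (\<integral>z. (thresh_sq c (null_mean c \<sigma>) (\<rho> + \<sigma>*z))\<^sup>2 \<partial>std_gauss)"
  shows "mse \<sigma> n \<mu> \<theta> = ennreal ((1/real n)\<^sup>2 *
     (((\<Sum>i<n. F (\<mu> i) * F (\<theta> i)) - (\<Sum>i<n. (\<mu> i)\<^sup>2 * (\<theta> i)\<^sup>2))\<^sup>2
      + (\<Sum>i<n. F2 (\<mu> i) * F2 (\<theta> i) - (F (\<mu> i))\<^sup>2 * (F (\<theta> i))\<^sup>2)))"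
proof -
  define f where "f \<rho> i = (\<lambda>z. thresh_sq c (null_mean c \<sigma>) (\<rho> i + \<sigma>*z))" for \<rho> :: "nat \<Rightarrow> real" and i
  define Q where "Q = (\<Sum>i<n. (\<mu> i)\<^sup>2 * (\<theta> i)\<^sup>2)"
  define G where "G = (\<lambda>w. ((\<Sum>i<n. f \<mu> i (fst w i) * f \<theta> i (snd w i)) - Q)\<^sup>2)"
  have err: "(Qhat2 \<sigma> n (\<lambda>i. \<mu> i + \<sigma> * fst w i) (\<lambda>i. \<theta> i + \<sigma> * snd w i) - Qfun n \<mu> \<theta>)\<^sup>2
      = (1/real n)\<^sup>2 * G w" for w
  proof -
    have "Qhat2 \<sigma> n (\<lambda>i. \<mu> i + \<sigma> * fst w i) (\<lambda>i. \<theta> i + \<sigma> * snd w i) - Qfun n \<mu> \<theta>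
        = (1/real n) * ((\<Sum>i<n. f \<mu> i (fst w i) * f \<theta> i (snd w i)) - Q)"
      unfolding Qhat2_def Qfun_def Q_def f_def thresh_sq_def c_def cent0_def null_mean_def
      by (simp add: right_diff_distrib)
    then show ?thesis unfolding G_def by (simp add: power_divide)
  qed
  have fi: "integrable std_gauss (f \<rho> i)" "integrable std_gauss (\<lambda>z. (f \<rho> i z)\<^sup>2)" for \<rho> i
    unfolding f_def by (rule integrable_thresh_sq integrable_thresh_sq_power2)+
  note decomp = integral_power2_sum_products_diff[OF prob_space_std_gauss, of "{..<n}" "f \<mu>" "f \<theta>" Q,
      folded noise_def G_def, simplified fi, simplified]
  have "mse \<sigma> n \<mu> \<theta> = (\<integral>\<^sup>+ w. ennreal ((1/real n)\<^sup>2 * G w) \<partial>noise n)"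
    unfolding mse_def err ..
  also have "\<dots> = ennreal ((1/real n)\<^sup>2 * integral\<^sup>L (noise n) G)"
    using decomp(1) by (subst nn_integral_eq_integral) (auto simp: G_def)
  finally show ?thesis
    unfolding decomp(2) by (simp add: Q_def F_def F2_def f_def)
qed

lemma abs_mult_diff_le:
  fixes a b p q D B :: real
  assumes "\<bar>a - p\<bar> \<le> D" "\<bar>b - q\<bar> \<le> D" "0 \<le> p" "p \<le> B" "0 \<le> q" "q \<le> B"
  shows "\<bar>a*b - p*q\<bar> \<le> D*(2*B + D)"
proof -
  have "a*b - p*q = (a - p)*b + p*(b - q)" by (simp add: algebra_simps)
  then have "\<bar>a*b - p*q\<bar> \<le> \<bar>a - p\<bar>*\<bar>b\<bar> + p*\<bar>b - q\<bar>"
    using abs_triangle_ineq[of "(a-p)*b" "p*(b-q)"] assms(3) by (simp add: abs_mult)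
  also have "\<dots> \<le> D*(B + D) + B*D"
    using assms by (intro add_mono mult_mono) (auto simp: abs_le_iff)
  finally show ?thesis by (simp add: algebra_simps)
qed

lemma sparse_bias_le:
  fixes F G \<mu> \<theta> :: "'i \<Rightarrow> real" and D B :: real
  assumes I: "finite I"
    and F: "\<And>i. i \<in> I \<Longrightarrow> \<bar>F i - (\<mu> i)\<^sup>2\<bar> \<le> D" and G: "\<And>i. i \<in> I \<Longrightarrow> \<bar>G i - (\<theta> i)\<^sup>2\<bar> \<le> D"
    and \<mu>: "\<And>i. i \<in> I \<Longrightarrow> (\<mu> i)\<^sup>2 \<le> B" and \<theta>: "\<And>i. i \<in> I \<Longrightarrow> (\<theta> i)\<^sup>2 \<le> B"
    and F0: "\<And>i. i \<in> I \<Longrightarrow> \<mu> i = 0 \<Longrightarrow> F i = 0" and G0: "\<And>i. i \<in> I \<Longrightarrow> \<theta> i = 0 \<Longrightarrow> G i = 0"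
  shows "\<bar>(\<Sum>i\<in>I. F i * G i) - (\<Sum>i\<in>I. (\<mu> i)\<^sup>2 * (\<theta> i)\<^sup>2)\<bar>
           \<le> card {i\<in>I. \<mu> i * \<theta> i \<noteq> 0} * (D*(2*B + D))"
proof -
  let ?S = "{i\<in>I. \<mu> i * \<theta> i \<noteq> 0}"
  have "(\<Sum>i\<in>I. F i * G i) - (\<Sum>i\<in>I. (\<mu> i)\<^sup>2 * (\<theta> i)\<^sup>2) = (\<Sum>i\<in>I. F i * G i - (\<mu> i)\<^sup>2 * (\<theta> i)\<^sup>2)"
    by (simp add: sum_subtractf)
  also have "\<dots> = (\<Sum>i\<in>?S. F i * G i - (\<mu> i)\<^sup>2 * (\<theta> i)\<^sup>2)"
    using I F0 G0 by (intro sum.mono_neutral_right) auto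
  finally have "\<bar>(\<Sum>i\<in>I. F i * G i) - (\<Sum>i\<in>I. (\<mu> i)\<^sup>2 * (\<theta> i)\<^sup>2)\<bar>
      \<le> (\<Sum>i\<in>?S. \<bar>F i * G i - (\<mu> i)\<^sup>2 * (\<theta> i)\<^sup>2\<bar>)"
    by (simp add: sum_abs)
  also have "\<dots> \<le> (\<Sum>i\<in>?S. D*(2*B + D))"
    using F G \<mu> \<theta> by (intro sum_mono abs_mult_diff_le) auto
  finally show ?thesis by simp
qed

lemma product_variance_le:
  fixes F F2 G G2 \<mu> \<theta> V W T R :: real
  assumes V: "0 \<le> V" and W: "0 \<le> W" "W \<le> T"
    and F: "0 \<le> F2 - F\<^sup>2" "F2 - F\<^sup>2 \<le> V" "F\<^sup>2 \<le> R\<^sup>2" and F0: "\<mu> = 0 \<Longrightarrow> F = 0 \<and> F2 = W"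
    and G: "0 \<le> G2 - G\<^sup>2" "G2 - G\<^sup>2 \<le> V" "G\<^sup>2 \<le> R\<^sup>2" and G0: "\<theta> = 0 \<Longrightarrow> G = 0 \<and> G2 = W"
  shows "F2*G2 - F\<^sup>2*G\<^sup>2 \<le> T\<^sup>2 + (if \<mu> \<noteq> 0 \<or> \<theta> \<noteq> 0 then (V + R\<^sup>2) * T else 0)
                            + (if \<mu> * \<theta> \<noteq> 0 then V\<^sup>2 + 2*V*R\<^sup>2 else 0)"
proof -
  have F2: "0 \<le> F2" "F2 \<le> V + R\<^sup>2" and G2: "0 \<le> G2" "G2 \<le> V + R\<^sup>2"
    using F G by (auto intro: order.trans[OF zero_le_power2])
  have VRT: "0 \<le> (V + R\<^sup>2) * T" using V W by simp
  consider "\<mu> = 0" "\<theta> = 0" | "\<mu> \<noteq> 0" "\<theta> = 0" | "\<mu> = 0" "\<theta> \<noteq> 0" | "\<mu> \<noteq> 0" "\<theta> \<noteq> 0"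
    by blast
  then show ?thesis
  proof cases
    case 1
    then have "F2*G2 - F\<^sup>2*G\<^sup>2 = W * W" using F0 G0 by simp
    also have "\<dots> \<le> T * T" using W by (intro mult_mono) auto
    finally show ?thesis using 1 by (simp add: power2_eq_square)
  next
    case 2
    then have "F2*G2 - F\<^sup>2*G\<^sup>2 = F2 * W" using G0 by simp
    also have "\<dots> \<le> (V + R\<^sup>2) * T" using W F2 by (intro mult_mono) auto
    finally show ?thesis using 2 by (simp add: add_increasing)
  next
    case 3
    then have "F2*G2 - F\<^sup>2*G\<^sup>2 = G2 * W" using F0 by simp
    also have "\<dots> \<le> (V + R\<^sup>2) * T" using W G2 by (intro mult_mono) auto
    finally show ?thesis using 3 by (simp add: add_increasing)
  next
    case 4
    have "F2*G2 - F\<^sup>2*G\<^sup>2 = (F2 - F\<^sup>2) * (G2 - G\<^sup>2) + (F2 - F\<^sup>2) * G\<^sup>2 + (G2 - G\<^sup>2) * F\<^sup>2"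
      by (simp add: algebra_simps)
    also have "\<dots> \<le> V*V + V*R\<^sup>2 + V*R\<^sup>2"
      using F G by (intro add_mono mult_mono) auto
    finally have "F2*G2 - F\<^sup>2*G\<^sup>2 \<le> V\<^sup>2 + 2*V*R\<^sup>2" by (simp add: power2_eq_square algebra_simps)
    then show ?thesis using 4 VRT by (simp add: add_increasing add.assoc)
  qed
qed

lemma sum_if_const: "finite I \<Longrightarrow> (\<Sum>i\<in>I. if P i then K else 0) = real (card {i\<in>I. P i}) * (K :: real)"
  by (simp add: sum.inter_filter[symmetric])

lemma sparse_variance_le:
  fixes F F2 G G2 \<mu> \<theta> :: "'i \<Rightarrow> real" and V W T R :: real
  assumes I: "finite I" and V: "0 \<le> V" and W: "0 \<le> W" "W \<le> T"
    and F: "\<And>i. i \<in> I \<Longrightarrow> 0 \<le> F2 i - (F i)\<^sup>2 \<and> F2 i - (F i)\<^sup>2 \<le> V \<and> (F i)\<^sup>2 \<le> R\<^sup>2"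
    and G: "\<And>i. i \<in> I \<Longrightarrow> 0 \<le> G2 i - (G i)\<^sup>2 \<and> G2 i - (G i)\<^sup>2 \<le> V \<and> (G i)\<^sup>2 \<le> R\<^sup>2"
    and F0: "\<And>i. i \<in> I \<Longrightarrow> \<mu> i = 0 \<Longrightarrow> F i = 0 \<and> F2 i = W"
    and G0: "\<And>i. i \<in> I \<Longrightarrow> \<theta> i = 0 \<Longrightarrow> G i = 0 \<and> G2 i = W"
  shows "(\<Sum>i\<in>I. F2 i * G2 i - (F i)\<^sup>2 * (G i)\<^sup>2)
           \<le> card I * T\<^sup>2 + card {i\<in>I. \<mu> i \<noteq> 0 \<or> \<theta> i \<noteq> 0} * ((V + R\<^sup>2) * T)
             + card {i\<in>I. \<mu> i * \<theta> i \<noteq> 0} * (V\<^sup>2 + 2*V*R\<^sup>2)"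
proof -
  have "(\<Sum>i\<in>I. F2 i * G2 i - (F i)\<^sup>2 * (G i)\<^sup>2)
      \<le> (\<Sum>i\<in>I. T\<^sup>2 + (if \<mu> i \<noteq> 0 \<or> \<theta> i \<noteq> 0 then (V + R\<^sup>2) * T else 0)
                  + (if \<mu> i * \<theta> i \<noteq> 0 then V\<^sup>2 + 2*V*R\<^sup>2 else 0))"
    using F G F0 G0 by (intro sum_mono product_variance_le[OF V W]) auto
  also have "\<dots> = card I * T\<^sup>2 + card {i\<in>I. \<mu> i \<noteq> 0 \<or> \<theta> i \<noteq> 0} * ((V + R\<^sup>2) * T)
      + card {i\<in>I. \<mu> i * \<theta> i \<noteq> 0} * (V\<^sup>2 + 2*V*R\<^sup>2)"
    using I by (simp add: sum.distrib sum_if_const del: of_nat_sum)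
  finally show ?thesis .
qed

lemma power2_le_powr_double: "\<bar>y\<bar> \<le> x powr b \<Longrightarrow> y\<^sup>2 \<le> x powr (2*b)" for x y b :: real
  using power_mono[of "\<bar>y\<bar>" "x powr b" 2] by (simp add: power2_eq_square flip: powr_add)

lemma card_filter_disj_le: "card {i\<in>I. P i \<or> Q i} \<le> card {i\<in>I. P i} + card {i\<in>I. Q i}"
proof -
  have "{i\<in>I. P i \<or> Q i} = {i\<in>I. P i} \<union> {i\<in>I. Q i}" by auto
  then show ?thesis by (simp add: card_Un_le)
qed

lemma mse_le_bias_variance_bounds:
  fixes \<sigma> \<kappa> \<beta> \<epsilon> b :: real and n :: nat
  assumes \<kappa>: "0 < \<kappa>" "\<kappa> < 1/2" and n: "1 \<le> n" and \<Omega>: "(\<mu>, \<theta>) \<in> Omega \<beta> \<epsilon> b n"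
  defines "D \<equiv> \<sigma>\<^sup>2 * tau n + \<sigma>\<^sup>2" and "B \<equiv> real n powr (2*b)"
  defines "V \<equiv> 4*B*\<sigma>\<^sup>2 + 2*\<sigma>^4" and "R \<equiv> B + D"
  defines "T \<equiv> \<sigma>^4 * (4/\<kappa>\<^sup>2) * exp (-\<kappa> * tau n) / sqrt (1 - 2*\<kappa>)"
  shows "mse \<sigma> n \<mu> \<theta> \<le> ennreal ((1/real n)\<^sup>2 * ((real n powr \<epsilon> * (D*(2*B + D)))\<^sup>2
      + (real n * T\<^sup>2 + 2 * real n powr \<beta> * ((V + R\<^sup>2) * T) + real n powr \<epsilon> * (V\<^sup>2 + 2*V*R\<^sup>2))))"
proof -
  define c where "c = \<sigma>\<^sup>2 * tau n"
  define F where "F \<rho> = (\<integral>z. thresh_sq c (null_mean c \<sigma>) (\<rho> + \<sigma>*z) \<partial>std_gauss)" for \<rho>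
  define F2 where "F2 \<rho> = (\<integral>z. (thresh_sq c (null_mean c \<sigma>) (\<rho> + \<sigma>*z))\<^sup>2 \<partial>std_gauss)" for \<rho>
  have c: "0 \<le> c" using n by (simp add: c_def tau_def)
  from \<Omega> have card_\<mu>: "card {i\<in>{..<n}. \<mu> i \<noteq> 0} \<le> real n powr \<beta>"
    and card_\<theta>: "card {i\<in>{..<n}. \<theta> i \<noteq> 0} \<le> real n powr \<beta>"
    and card_\<mu>\<theta>: "card {i\<in>{..<n}. \<mu> i * \<theta> i \<noteq> 0} \<le> real n powr \<epsilon>"
    and \<mu>: "\<And>i. i < n \<Longrightarrow> (\<mu> i)\<^sup>2 \<le> B" and \<theta>: "\<And>i. i < n \<Longrightarrow> (\<theta> i)\<^sup>2 \<le> B"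
    by (auto simp: Omega_def B_def intro!: power2_le_powr_double)
  have mom: "\<bar>F \<rho> - \<rho>\<^sup>2\<bar> \<le> D" "0 \<le> F2 \<rho> - (F \<rho>)\<^sup>2 \<and> F2 \<rho> - (F \<rho>)\<^sup>2 \<le> V \<and> (F \<rho>)\<^sup>2 \<le> R\<^sup>2"
    if "\<rho>\<^sup>2 \<le> B" for \<rho>
    using thresh_sq_moments[OF c that, of \<sigma>]
    unfolding F_def F2_def D_def V_def R_def c_def by (simp_all add: add.assoc)
  have null: "F 0 = 0" "0 \<le> F2 0" "F2 0 \<le> T"
    using integral_thresh_sq_null[of c \<sigma>] null_thresh_sq_second_moment_le[OF \<kappa>, of \<sigma> "tau n"]
    by (auto simp: F_def F2_def T_def c_def)
  have "0 \<le> B" by (simp add: B_def)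
  then have V: "0 \<le> V" by (simp add: V_def)
  have "\<bar>(\<Sum>i<n. F (\<mu> i) * F (\<theta> i)) - (\<Sum>i<n. (\<mu> i)\<^sup>2 * (\<theta> i)\<^sup>2)\<bar>
      \<le> card {i\<in>{..<n}. \<mu> i * \<theta> i \<noteq> 0} * (D*(2*B + D))"
    using \<mu> \<theta> mom null by (intro sparse_bias_le) auto
  also have "\<dots> \<le> real n powr \<epsilon> * (D*(2*B + D))"
    using card_\<mu>\<theta> c \<open>0 \<le> B\<close> by (intro mult_right_mono) (auto simp: D_def c_def)
  finally have bias: "((\<Sum>i<n. F (\<mu> i) * F (\<theta> i)) - (\<Sum>i<n. (\<mu> i)\<^sup>2 * (\<theta> i)\<^sup>2))\<^sup>2
      \<le> (real n powr \<epsilon> * (D*(2*B + D)))\<^sup>2"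
    using power_mono[OF _ abs_ge_zero, of _ _ 2] by fastforce
  have card_union: "card {i\<in>{..<n}. \<mu> i \<noteq> 0 \<or> \<theta> i \<noteq> 0} \<le> 2 * real n powr \<beta>"
    using card_filter_disj_le[of "{..<n}" "\<lambda>i. \<mu> i \<noteq> 0" "\<lambda>i. \<theta> i \<noteq> 0"] card_\<mu> card_\<theta> by linarith
  have "(\<Sum>i<n. F2 (\<mu> i) * F2 (\<theta> i) - (F (\<mu> i))\<^sup>2 * (F (\<theta> i))\<^sup>2)
      \<le> card {..<n} * T\<^sup>2 + card {i\<in>{..<n}. \<mu> i \<noteq> 0 \<or> \<theta> i \<noteq> 0} * ((V + R\<^sup>2) * T)
        + card {i\<in>{..<n}. \<mu> i * \<theta> i \<noteq> 0} * (V\<^sup>2 + 2*V*R\<^sup>2)"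
    using \<mu> \<theta> mom null V by (intro sparse_variance_le[where W = "F2 0"]) auto
  also have "\<dots> \<le> real n * T\<^sup>2 + 2 * real n powr \<beta> * ((V + R\<^sup>2) * T) + real n powr \<epsilon> * (V\<^sup>2 + 2*V*R\<^sup>2)"
    using card_union card_\<mu>\<theta> V null by (intro add_mono mult_right_mono) auto
  finally have var: "(\<Sum>i<n. F2 (\<mu> i) * F2 (\<theta> i) - (F (\<mu> i))\<^sup>2 * (F (\<theta> i))\<^sup>2)
      \<le> real n * T\<^sup>2 + 2 * real n powr \<beta> * ((V + R\<^sup>2) * T) + real n powr \<epsilon> * (V\<^sup>2 + 2*V*R\<^sup>2)" .
  show ?thesis
    unfolding mse_eq_bias_variance F_def[symmetric] F2_def[symmetric] c_def[symmetric]
    using bias var by (intro ennreal_leI mult_left_mono add_mono) auto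
qed

section \<open>Rates\<close>

lemma ln_le_powr_div: "0 < x \<Longrightarrow> 0 < a \<Longrightarrow> ln x \<le> x powr a / a" for x a :: real
  using ln_le_minus_one[of "x powr a"] by (simp add: ln_powr field_simps)

lemma dominating_constant:
  fixes \<sigma> b x :: real
  assumes b: "0 < b" and x: "3 \<le> x"
  defines "a \<equiv> 1 + 4*\<sigma>\<^sup>2 + 2*\<sigma>^4 + \<sigma>\<^sup>2/b" and "L \<equiv> ln x" and "B \<equiv> x powr (2*b)"
  defines "D \<equiv> \<sigma>\<^sup>2 * L + \<sigma>\<^sup>2" and "V \<equiv> 4*B*\<sigma>\<^sup>2 + 2*\<sigma>^4"
  defines "R \<equiv> B + D"
  shows "1 \<le> L" "1 \<le> B" "0 \<le> D" "D \<le> a*L" "D \<le> a*B" "0 \<le> V" "V \<le> a*B" "0 \<le> R" "R \<le> a*B"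
proof -
  have \<sigma>: "0 \<le> \<sigma>\<^sup>2" "0 \<le> \<sigma>^4" "\<sigma>\<^sup>2/(2*b) \<le> \<sigma>\<^sup>2/b" "0 \<le> \<sigma>\<^sup>2/(2*b)"
    using b by (auto intro: divide_left_mono)
  show L: "1 \<le> L" using exp_le x ln_ge_iff[of x 1] by (simp add: L_def)
  show B: "1 \<le> B" using x b by (simp add: B_def ge_one_powr_ge_zero)
  show "0 \<le> D" using L by (simp add: D_def)
  have "D \<le> 2*\<sigma>\<^sup>2*L" using mult_right_mono[OF L, of "\<sigma>\<^sup>2"] by (simp add: D_def)
  also have "\<dots> \<le> a*L" using L \<sigma> by (intro mult_right_mono) (auto simp: a_def)
  finally show "D \<le> a*L" .
  have "L \<le> B / (2*b)" using ln_le_powr_div[of x "2*b"] x b by (simp add: L_def B_def)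
  then have "D \<le> \<sigma>\<^sup>2 * (B/(2*b)) + \<sigma>\<^sup>2 * B"
    unfolding D_def using mult_left_mono[OF B, of "\<sigma>\<^sup>2"] by (intro add_mono mult_left_mono) auto
  then have "R \<le> (1 + \<sigma>\<^sup>2/(2*b) + \<sigma>\<^sup>2) * B" by (simp add: R_def algebra_simps)
  also have "\<dots> \<le> a * B"
  proof (rule mult_right_mono)
    show "1 + \<sigma>\<^sup>2/(2*b) + \<sigma>\<^sup>2 \<le> a" unfolding a_def using \<sigma> by linarith
  qed (use B in simp)
  finally show "R \<le> a*B" .
  show "0 \<le> R" "D \<le> a*B" using B \<open>0 \<le> D\<close> \<open>R \<le> a*B\<close> by (simp_all add: R_def)
  show "0 \<le> V" using B by (simp add: V_def)
  have "V \<le> (4*\<sigma>\<^sup>2 + 2*\<sigma>^4) * B"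
    using mult_left_mono[OF B, of "2*\<sigma>^4"] by (simp add: V_def algebra_simps)
  also have "\<dots> \<le> a * B" using B \<sigma> by (intro mult_right_mono) (auto simp: a_def)
  finally show "V \<le> a*B" .
qed

lemma bias_rate_le:
  fixes x a b \<epsilon> L D :: real
  assumes "0 < x" "0 \<le> a" "0 \<le> L" "0 \<le> D" "D \<le> a*L" "D \<le> a * x powr (2*b)"
  shows "(x powr \<epsilon> * (D*(2 * x powr (2*b) + D)))\<^sup>2 \<le> (a*(2 + a))\<^sup>2 * (x powr (2*\<epsilon> + 4*b) * L\<^sup>2)"
proof -
  define B where "B = x powr (2*b)"
  have "D*(2*B + D) \<le> (a*L) * (2*B + a*B)"
    using assms by (intro mult_mono add_left_mono) (auto simp: B_def)
  then have "(x powr \<epsilon> * (D*(2*B + D)))\<^sup>2 \<le> (x powr \<epsilon> * (a*(2 + a) * (B*L)))\<^sup>2"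
    using assms by (intro power_mono mult_left_mono) (auto simp: B_def algebra_simps)
  also have "\<dots> = (a*(2 + a))\<^sup>2 * ((x powr \<epsilon> * x powr \<epsilon> * B * B) * L\<^sup>2)"
    by (simp add: power2_eq_square)
  also have "x powr \<epsilon> * x powr \<epsilon> * B * B = x powr (2*\<epsilon> + 4*b)"
    by (simp add: B_def flip: powr_add) (simp add: algebra_simps)
  finally show ?thesis by (simp add: B_def)
qed

lemma cross_term_le:
  fixes x B V R T a t \<kappa> \<beta> :: real
  assumes x: "1 \<le> x" and B: "1 \<le> B" and a: "0 \<le> a" and t: "0 \<le> t"
    and V: "0 \<le> V" "V \<le> a*B" and R: "0 \<le> R" "R \<le> a*B" and T: "0 \<le> T" "T \<le> t * x powr (-\<kappa>)"
    and \<beta>: "\<beta> \<le> \<kappa>"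
  shows "x powr \<beta> * ((V + R\<^sup>2) * T) \<le> (a + a\<^sup>2) * t * B\<^sup>2"
proof -
  have "x powr \<beta> * ((V + R\<^sup>2) * T) \<le> x powr \<beta> * ((a*B + (a*B)\<^sup>2) * (t * x powr (-\<kappa>)))"
    using V R T by (intro mult_left_mono mult_mono add_mono power_mono) auto
  also have "\<dots> = (a*B + a\<^sup>2*B\<^sup>2) * t * x powr (\<beta> - \<kappa>)"
    by (simp add: powr_diff powr_minus power_mult_distrib field_simps)
  also have "\<dots> \<le> ((a + a\<^sup>2)*B\<^sup>2) * t * 1"
  proof (intro mult_mono)
    show "a*B + a\<^sup>2*B\<^sup>2 \<le> (a + a\<^sup>2)*B\<^sup>2"
      using a B power_increasing[of 1 2 B] by (simp add: distrib_right mult_left_mono)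
    show "x powr (\<beta> - \<kappa>) \<le> 1"
      using powr_mono[of "\<beta> - \<kappa>" 0 x] x \<beta> by simp
  qed (use a t B in auto)
  finally show ?thesis by (simp add: mult_ac)
qed

lemma variance_rate_le:
  fixes x B V R T a t \<kappa> \<beta> \<epsilon> :: real
  assumes x: "1 \<le> x" and B: "1 \<le> B" and a: "0 \<le> a" and t: "0 \<le> t"
    and V: "0 \<le> V" "V \<le> a*B" and R: "0 \<le> R" "R \<le> a*B" and T: "0 \<le> T" "T \<le> t * x powr (-\<kappa>)"
    and \<epsilon>: "0 \<le> \<epsilon>" "1 - 2*\<kappa> \<le> \<epsilon>" and \<beta>: "\<beta> \<le> \<kappa>"
  shows "x*T\<^sup>2 + 2 * x powr \<beta> * ((V + R\<^sup>2) * T) + x powr \<epsilon> * (V\<^sup>2 + 2*V*R\<^sup>2)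
           \<le> (t\<^sup>2 + 2*(a + a\<^sup>2)*t + (a\<^sup>2 + 2*a^3)) * (x powr \<epsilon> * B^3)"
proof -
  have B3: "1 \<le> B^3" "B\<^sup>2 \<le> B^3"
    using B power_increasing[of 2 3 B] by (simp_all add: one_le_power)
  have xe: "1 \<le> x powr \<epsilon>" using ge_one_powr_ge_zero[OF x \<epsilon>(1)] .
  have "x*T\<^sup>2 \<le> x * (t * x powr (-\<kappa>))\<^sup>2"
    using T x by (intro mult_left_mono power_mono) auto
  also have "\<dots> = t\<^sup>2 * (x powr 1 * x powr (-\<kappa>) * x powr (-\<kappa>))"
    using x by (simp add: power2_eq_square)
  also have "\<dots> = t\<^sup>2 * x powr (1 - 2*\<kappa>)"
    by (simp only: powr_add[symmetric]) (simp add: algebra_simps)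
  also have "\<dots> \<le> t\<^sup>2 * (x powr \<epsilon> * 1)"
    using powr_mono[OF \<epsilon>(2) x] by (intro mult_left_mono) auto
  finally have null: "x*T\<^sup>2 \<le> t\<^sup>2 * (x powr \<epsilon> * 1)" .
  have cross: "x powr \<beta> * ((V + R\<^sup>2) * T) \<le> (a + a\<^sup>2) * t * (1 * B\<^sup>2)"
    using cross_term_le[OF x B a t V R T \<beta>] by simp
  have "V\<^sup>2 + 2*V*R\<^sup>2 \<le> (a*B)\<^sup>2 + 2*(a*B)*(a*B)\<^sup>2"
    using V R by (intro add_mono mult_mono power_mono) auto
  also have "\<dots> \<le> (a\<^sup>2 + 2*a^3) * B^3"
    using mult_left_mono[OF B3(2), of "a\<^sup>2"] a
    by (simp add: power_mult_distrib algebra_simps power3_eq_cube power2_eq_square)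
  finally have sparse: "x powr \<epsilon> * (V\<^sup>2 + 2*V*R\<^sup>2) \<le> (a\<^sup>2 + 2*a^3) * (x powr \<epsilon> * B^3)"
    by (simp add: mult_left_mono mult.left_commute)
  have "t\<^sup>2 * (x powr \<epsilon> * 1) \<le> t\<^sup>2 * (x powr \<epsilon> * B^3)"
    and "(a + a\<^sup>2) * t * (1 * B\<^sup>2) \<le> (a + a\<^sup>2) * t * (x powr \<epsilon> * B^3)"
    using B3 xe a t by (intro mult_left_mono mult_mono; simp)+
  with null cross sparse show ?thesis by (simp add: algebra_simps)
qed

lemma mse_rate:
  fixes \<beta> \<epsilon> b \<sigma> \<kappa> :: real
  assumes b: "0 < b" and \<epsilon>: "0 < \<epsilon>"
    and \<kappa>: "0 < \<kappa>" "\<kappa> < 1/2" "1 - 2*\<kappa> \<le> \<epsilon>" "\<beta> \<le> \<kappa>"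
  shows "\<exists>C>0. \<forall>n\<ge>3. \<forall>\<mu> \<theta>. (\<mu>, \<theta>) \<in> Omega \<beta> \<epsilon> b n \<longrightarrow>
           mse \<sigma> n \<mu> \<theta> \<le> ennreal (C * (real n powr (2*\<epsilon> + 4*b - 2) * (ln (real n))\<^sup>2
                                        + real n powr (\<epsilon> + 6*b - 2)))"
proof -
  define a where "a = 1 + 4*\<sigma>\<^sup>2 + 2*\<sigma>^4 + \<sigma>\<^sup>2/b"
  define t where "t = \<sigma>^4 * (4/\<kappa>\<^sup>2) / sqrt (1 - 2*\<kappa>)"
  define K where "K = t\<^sup>2 + 2*(a + a\<^sup>2)*t + (a\<^sup>2 + 2*a^3)"
  have a: "1 \<le> a" using b by (simp add: a_def)
  have t: "0 \<le> t" using \<kappa> by (simp add: t_def)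
  have K: "0 \<le> K" using a t by (simp add: K_def)
  show ?thesis
  proof (intro exI[of _ "(a*(2 + a))\<^sup>2 + K"] conjI allI impI)
    show "0 < (a*(2 + a))\<^sup>2 + K" using a K by (simp add: add_pos_nonneg)
    fix n :: nat and \<mu> \<theta> assume n: "3 \<le> n" and \<Omega>: "(\<mu>, \<theta>) \<in> Omega \<beta> \<epsilon> b n"
    define x L B where "x = real n" and "L = ln x" and "B = x powr (2*b)"
    define D V R where "D = \<sigma>\<^sup>2 * L + \<sigma>\<^sup>2" and "V = 4*B*\<sigma>\<^sup>2 + 2*\<sigma>^4" and "R = B + D"
    define T where "T = \<sigma>^4 * (4/\<kappa>\<^sup>2) * exp (-\<kappa> * L) / sqrt (1 - 2*\<kappa>)"
    have x: "3 \<le> x" using n by (simp add: x_def)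
    note dom = dominating_constant(1,2)[OF b x, folded L_def B_def]
      dominating_constant(3-9)[OF b x, where \<sigma> = \<sigma>, folded a_def L_def B_def, folded D_def V_def,
        folded R_def]
    have T: "0 \<le> T" "T \<le> t * x powr (-\<kappa>)"
      using x \<kappa> by (simp_all add: T_def t_def L_def powr_def)
    have bias: "(x powr \<epsilon> * (D*(2*B + D)))\<^sup>2 \<le> (a*(2 + a))\<^sup>2 * (x powr (2*\<epsilon> + 4*b) * L\<^sup>2)"
      using bias_rate_le[of x a L D b \<epsilon>] dom x a unfolding B_def by auto
    have "x powr \<epsilon> * B^3 = x powr (\<epsilon> + 6*b)"
      by (simp add: B_def power3_eq_cube flip: powr_add)
    then have var: "x*T\<^sup>2 + 2 * x powr \<beta> * ((V + R\<^sup>2) * T) + x powr \<epsilon> * (V\<^sup>2 + 2*V*R\<^sup>2)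
        \<le> K * x powr (\<epsilon> + 6*b)"
      using variance_rate_le[of x B a t V R T \<kappa> \<epsilon> \<beta>] dom x a t T \<epsilon> \<kappa> by (simp add: K_def)
    have "(1/x)\<^sup>2 * ((x powr \<epsilon> * (D*(2*B + D)))\<^sup>2
        + (x * T\<^sup>2 + 2 * x powr \<beta> * ((V + R\<^sup>2) * T) + x powr \<epsilon> * (V\<^sup>2 + 2*V*R\<^sup>2)))
      \<le> (1/x)\<^sup>2 * ((a*(2 + a))\<^sup>2 * (x powr (2*\<epsilon> + 4*b) * L\<^sup>2) + K * x powr (\<epsilon> + 6*b))"
      using bias var by (intro mult_left_mono add_mono) auto
    also have "\<dots> = (a*(2 + a))\<^sup>2 * (x powr (2*\<epsilon> + 4*b - 2) * L\<^sup>2) + K * x powr (\<epsilon> + 6*b - 2)"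
      using x by (simp add: powr_diff power2_eq_square field_simps)
    also have "\<dots> \<le> ((a*(2 + a))\<^sup>2 + K) * (x powr (2*\<epsilon> + 4*b - 2) * L\<^sup>2 + x powr (\<epsilon> + 6*b - 2))"
      using K by (simp add: algebra_simps)
    finally show "mse \<sigma> n \<mu> \<theta> \<le> ennreal (((a*(2 + a))\<^sup>2 + K) * (real n powr (2*\<epsilon> + 4*b - 2)
        * (ln (real n))\<^sup>2 + real n powr (\<epsilon> + 6*b - 2)))"
      using mse_le_bias_variance_bounds[OF \<kappa>(1,2) _ \<Omega>, of \<sigma>] n
      unfolding x_def L_def B_def D_def V_def R_def T_def tau_def
      by (auto intro: order.trans ennreal_leI)
  qed
qed

theorem theorem1:
  fixes \<beta> \<epsilon> b \<sigma> :: real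
  assumes "0 < \<epsilon>" "\<epsilon> \<le> \<beta>" "\<beta> < 1/2" "0 < b" "0 < \<sigma>"
  shows "\<exists>C>0. \<exists>N. \<forall>n\<ge>N. \<forall>\<mu> \<theta>. (\<mu>, \<theta>) \<in> Omega \<beta> \<epsilon> b n \<longrightarrow>
           mse \<sigma> n \<mu> \<theta> \<le> ennreal (C * (real n powr (2*\<epsilon> + 4*b - 2) * (ln (real n))\<^sup>2
                                        + real n powr (\<epsilon> + 6*b - 2)))"
proof -
  define \<kappa> where "\<kappa> = max \<beta> ((1 - \<epsilon>)/2)"
  have "0 < \<kappa>" "\<kappa> < 1/2" "1 - 2*\<kappa> \<le> \<epsilon>" "\<beta> \<le> \<kappa>"
    using assms unfolding \<kappa>_def max_def by (auto simp: field_simps)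
  from mse_rate[OF assms(4,1) this, of \<sigma>] show ?thesis by blast
qed

end
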